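(* There is a function $\widehat g(n)=\Theta(\log^2 n)$ such that for all $n$, all distinct $i,j\in[n]$, every real $\delta\ge0$ and every integer $0\le t\le n\log n$, $$\sum_{m=2}^{n-1}\mathcal{P}^{n,t}_{1,m}\big([n]\times\overline{j\pm\delta}\big)\le 2\delta+\widehat g(n),$$ where $\widehat g$ does not depend on $i,j,\delta,t$.
   Context: The random-to-random insertions shuffle on a deck of $n$ cards numbered $1,\dots,n$: at each step a card is chosen uniformly at random, removed, and reinserted at a uniformly random position. Orderings are identified with $\sigma\in S_n$, $\sigma(k)$ being the position of card $k$; $\Pi_t$ is the induced random walk on $S_n$ and $\mathbb{P}^n_\sigma$ its law started at $\sigma$. $A^t$ is the (random) set of cards not chosen for removal in the first $t$ shuffles. For $k$ and $M\ge0$, $\overline{k\pm M}=[n]\cap[k-M,k+M]$. For distinct $i,j\in[n]$, $m_1\in[n-1]$, $m_2\in[n]$ and integer $t\ge0$, let $\sigma\in S_n$ be any permutation with $\sigma(j)=m_2$ and $\sigma(i)=m_1+1$ if $m_2\le m_1$, $\sigma(i)=m_1$ if $m_2>m_1$, and define the probability measure on $[n]\times[n]$ $$\mathcal{P}^{n,t}_{m_1,m_2}(\cdot)=\mathbb{P}^n_\sigma\big((\Pi_t(i),\Pi_t(j))\in\cdot\,\big|\,i,j\in A^t\big).$$ $\log$ is the natural logarithm. *)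

theory Defs
  imports "HOL-Probability.Probability" "HOL-Library.Landau_Symbols" "HOL-Combinatorics.Permutations"
begin

text \<open>Cards and positions are numbered 1..n. An ordering is a permutation
  sigma permuting {1..n}, sigma k = position of card k.
  rtr_move n sigma c p: remove card c and reinsert it at position p.\<close>
definition rtr_move :: "nat \<Rightarrow> (nat \<Rightarrow> nat) \<Rightarrow> nat \<Rightarrow> nat \<Rightarrow> (nat \<Rightarrow> nat)" where
  "rtr_move n \<sigma> c p = (\<lambda>k. if k = c then p
      else if \<sigma> c < p \<and> \<sigma> c < \<sigma> k \<and> \<sigma> k \<le> p then \<sigma> k - 1
      else if p < \<sigma> c \<and> p \<le> \<sigma> k \<and> \<sigma> k < \<sigma> c then \<sigma> k + 1
      else \<sigma> k)"

text \<open>Joint law of (Pi_t, set of cards chosen for removal in the first t shuffles),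
  started at sigma: at each step card c and position p are chosen independently
  and uniformly from [n].\<close>
fun rtr_walk :: "nat \<Rightarrow> nat \<Rightarrow> (nat \<Rightarrow> nat) \<Rightarrow> ((nat \<Rightarrow> nat) \<times> nat set) pmf" where
  "rtr_walk n 0 \<sigma> = return_pmf (\<sigma>, {})"
| "rtr_walk n (Suc t) \<sigma> =
     bind_pmf (rtr_walk n t \<sigma>) (\<lambda>(\<tau>, C).
       map_pmf (\<lambda>(c, p). (rtr_move n \<tau> c p, insert c C))
               (pmf_of_set ({1..n} \<times> {1..n})))"

definition A_set :: "nat \<Rightarrow> nat set \<Rightarrow> nat set" where
  "A_set n C = {1..n} - C"

definition cond_pair_prob ::
  "nat \<Rightarrow> nat \<Rightarrow> (nat \<Rightarrow> nat) \<Rightarrow> nat \<Rightarrow> nat \<Rightarrow> (nat \<times> nat) set \<Rightarrow> real" where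
  "cond_pair_prob n t \<sigma> i j S =
     measure_pmf.prob (rtr_walk n t \<sigma>)
        {(\<tau>, C). (\<tau> i, \<tau> j) \<in> S \<and> i \<in> A_set n C \<and> j \<in> A_set n C}
     / measure_pmf.prob (rtr_walk n t \<sigma>)
        {(\<tau>, C). i \<in> A_set n C \<and> j \<in> A_set n C}"

definition window :: "nat \<Rightarrow> nat \<Rightarrow> real \<Rightarrow> nat set" where
  "window n k M = {x \<in> {1..n}. real k - M \<le> real x \<and> real x \<le> real k + M}"

end

theory Submission
  imports Defs "HOL-Real_Asymp.Real_Asymp"
begin

text \<open>Card i starts on top, card j at position m. As long as neither is chosen for removal
  (probability ((n-2)/n)^t), i stays above j and j only moves when another card is carried
  across it; for each position s of j the number of moves sending j to y depends only on s and y,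
  and for fixed y these counts sum to (n-1)^2. Since the starting positions m are distinct,
  summing over m the probabilities that j sits at y with i, j unchosen gives at most
  ((n-1)/n)^(2t). Dividing by ((n-2)/n)^t leaves (1 + 1/(n(n-2)))^t \<le> n^(1/(n-2)) = 1 + O(log n / n)
  per position of the window, which has at most min(2\<delta>+1, n) positions.\<close>

definition reinsert_pos :: "nat \<Rightarrow> nat \<Rightarrow> nat \<Rightarrow> nat" where
  "reinsert_pos x p s = (if s = x then p
      else if x < p \<and> x < s \<and> s \<le> p then s - 1
      else if p < x \<and> p \<le> s \<and> s < x then s + 1
      else s)"

lemma rtr_move_eq_reinsert_pos:
  assumes "inj_on \<tau> {1..n}" "c \<in> {1..n}" "k \<in> {1..n}"
  shows "rtr_move n \<tau> c p k = reinsert_pos (\<tau> c) p (\<tau> k)"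
  using assms inj_on_eq_iff[OF assms(1)] by (auto simp: rtr_move_def reinsert_pos_def)

lemma reinsert_pos_inverse: "reinsert_pos p x (reinsert_pos x p s) = s"
  by (auto simp: reinsert_pos_def)

lemma reinsert_pos_in_range:
  assumes "x \<in> {1..n}" "p \<in> {1..n}" "s \<in> {1..n}"
  shows "reinsert_pos x p s \<in> {1..n}"
  using assms by (auto simp: reinsert_pos_def)

lemma reinsert_pos_strict_mono:
  assumes "s \<noteq> x" "s' \<noteq> x" "s < s'"
  shows "reinsert_pos x p s < reinsert_pos x p s'"
  using assms by (auto simp: reinsert_pos_def)

lemma bij_betw_reinsert_pos:
  assumes "x \<in> {1..n}" "p \<in> {1..n}"
  shows "bij_betw (reinsert_pos x p) {1..n} {1..n}"
  by (rule bij_betw_byWitness[where f' = "reinsert_pos p x"])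
     (use assms reinsert_pos_inverse reinsert_pos_in_range in blast)+

lemma bij_betw_rtr_move:
  assumes \<tau>: "bij_betw \<tau> {1..n} {1..n}" and "c \<in> {1..n}" "p \<in> {1..n}"
  shows "bij_betw (rtr_move n \<tau> c p) {1..n} {1..n}"
proof -
  have "\<tau> c \<in> {1..n}" using \<tau> \<open>c \<in> {1..n}\<close> bij_betwE by blast
  then have "bij_betw (reinsert_pos (\<tau> c) p \<circ> \<tau>) {1..n} {1..n}"
    using \<tau> bij_betw_reinsert_pos \<open>p \<in> {1..n}\<close> bij_betw_trans by blast
  moreover have "\<And>k. k \<in> {1..n} \<Longrightarrow> (reinsert_pos (\<tau> c) p \<circ> \<tau>) k = rtr_move n \<tau> c p k"
    using rtr_move_eq_reinsert_pos bij_betw_imp_inj_on[OF \<tau>] \<open>c \<in> {1..n}\<close> by simp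
  ultimately show ?thesis using bij_betw_cong by blast
qed

lemma rtr_move_preserves_order:
  assumes \<tau>: "bij_betw \<tau> {1..n} {1..n}" and "c \<in> {1..n}" "i \<in> {1..n}" "j \<in> {1..n}"
    and "c \<noteq> i" "c \<noteq> j" "\<tau> i < \<tau> j"
  shows "rtr_move n \<tau> c p i < rtr_move n \<tau> c p j"
proof -
  have inj: "inj_on \<tau> {1..n}" using \<tau> bij_betw_imp_inj_on by blast
  then have "\<tau> i \<noteq> \<tau> c" "\<tau> j \<noteq> \<tau> c" using assms inj_on_eq_iff by metis+
  then show ?thesis
    using assms rtr_move_eq_reinsert_pos[OF inj] reinsert_pos_strict_mono by simp
qed

lemma measure_bind_pmf:
  "measure_pmf.prob (bind_pmf M N) X = (\<integral>x. measure_pmf.prob (N x) X \<partial>M)"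
  unfolding measure_pmf_bind
  by (rule measure_pmf.measure_bind[where N = "count_space UNIV"])
     (auto simp: measure_pmf_in_subprob_algebra)

lemma integral_pmf_indicator_comb:
  fixes a b c :: real
  shows "(\<integral>x. a * indicator A x + b * indicator B x + c * indicator D x \<partial>measure_pmf M)
       = a * measure_pmf.prob M A + b * measure_pmf.prob M B + c * measure_pmf.prob M D"
  by (simp add: measure_pmf.emeasure_eq_measure)

definition rtr_step :: "nat \<Rightarrow> (nat \<Rightarrow> nat) \<times> nat set \<Rightarrow> ((nat \<Rightarrow> nat) \<times> nat set) pmf" where
  "rtr_step n = (\<lambda>(\<tau>, C). map_pmf (\<lambda>(c, p). (rtr_move n \<tau> c p, insert c C))
                              (pmf_of_set ({1..n} \<times> {1..n})))"

lemma rtr_walk_Suc_bind: "rtr_walk n (Suc t) \<sigma> = bind_pmf (rtr_walk n t \<sigma>) (rtr_step n)"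
  by (simp add: rtr_step_def)

lemma measure_rtr_step:
  assumes "n \<ge> 1"
  shows "measure_pmf.prob (rtr_step n (\<tau>, C)) E
     = card {(c, p) \<in> {1..n} \<times> {1..n}. (rtr_move n \<tau> c p, insert c C) \<in> E} / (real n)\<^sup>2"
proof -
  have "{1..n} \<times> {1..n} \<noteq> {}" using assms by auto
  moreover have "{1..n} \<times> {1..n} \<inter> (\<lambda>(c, p). (rtr_move n \<tau> c p, insert c C)) -` E
      = {(c, p) \<in> {1..n} \<times> {1..n}. (rtr_move n \<tau> c p, insert c C) \<in> E}" by auto
  ultimately show ?thesis
    by (simp add: rtr_step_def measure_pmf_of_set card_cartesian_product power2_eq_square)
qed

lemma rtr_walk_support:
  assumes "n \<ge> 1" "bij_betw \<sigma> {1..n} {1..n}" "i \<in> {1..n}" "j \<in> {1..n}" "\<sigma> i < \<sigma> j"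
    and "(\<tau>, C) \<in> set_pmf (rtr_walk n t \<sigma>)"
  shows "bij_betw \<tau> {1..n} {1..n}" and "i \<notin> C \<Longrightarrow> j \<notin> C \<Longrightarrow> \<tau> i < \<tau> j"
proof -
  have "bij_betw \<tau> {1..n} {1..n} \<and> (i \<notin> C \<and> j \<notin> C \<longrightarrow> \<tau> i < \<tau> j)"
    using assms(6)
  proof (induction t arbitrary: \<tau> C)
    case 0
    then show ?case using assms by simp
  next
    case (Suc t)
    have "{1..n} \<times> {1..n} \<noteq> {}" using assms(1) by auto
    with Suc.prems obtain \<tau>' C' c p where prev: "(\<tau>', C') \<in> set_pmf (rtr_walk n t \<sigma>)"
      and cp: "c \<in> {1..n}" "p \<in> {1..n}" and new: "\<tau> = rtr_move n \<tau>' c p" "C = insert c C'"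
      by (auto simp: set_pmf_of_set)
    from Suc.IH[OF prev] show ?case
      using bij_betw_rtr_move[OF _ cp] rtr_move_preserves_order[OF _ cp(1) assms(3,4)] new by auto
  qed
  then show "bij_betw \<tau> {1..n} {1..n}" and "i \<notin> C \<Longrightarrow> j \<notin> C \<Longrightarrow> \<tau> i < \<tau> j" by auto
qed

definition both_unchosen :: "nat \<Rightarrow> nat \<Rightarrow> ((nat \<Rightarrow> nat) \<times> nat set) set" where
  "both_unchosen i j = {(\<tau>, C). i \<notin> C \<and> j \<notin> C}"

lemma prob_both_unchosen:
  assumes "i \<in> {1..n}" "j \<in> {1..n}" "i \<noteq> j"
  shows "measure_pmf.prob (rtr_walk n t \<sigma>) (both_unchosen i j) = ((real n - 2) / real n) ^ t"
proof (induction t)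
  case 0
  then show ?case by (simp add: both_unchosen_def)
next
  case (Suc t)
  have n: "n \<ge> 2" using assms by auto
  have step: "measure_pmf.prob (rtr_step n x) (both_unchosen i j)
      = (real n - 2) / real n * indicator (both_unchosen i j) x" for x
  proof (cases x)
    case (Pair \<tau> C)
    have "{(c, p) \<in> {1..n} \<times> {1..n}. (rtr_move n \<tau> c p, insert c C) \<in> both_unchosen i j}
        = (if i \<notin> C \<and> j \<notin> C then ({1..n} - {i, j}) \<times> {1..n} else {})"
      by (auto simp: both_unchosen_def)
    then show ?thesis
      using assms n by (simp add: Pair measure_rtr_step card_cartesian_product of_nat_diff
                                  power2_eq_square both_unchosen_def)
  qed
  show ?case
    by (simp add: rtr_walk_Suc_bind measure_bind_pmf step Suc.IH del: rtr_walk.simps)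
qed

definition down_moves :: "nat \<Rightarrow> nat \<Rightarrow> real" where
  "down_moves n s = (real s - 2) * (real n - real s + 1)"

definition up_moves :: "nat \<Rightarrow> nat \<Rightarrow> real" where
  "up_moves n s = (real n - real s) * real s"

definition stay_moves :: "nat \<Rightarrow> nat \<Rightarrow> real" where
  "stay_moves n s = real n * (real n - 2) - down_moves n s - up_moves n s"

text \<open>The number of moves (c, p) with c \<notin> {i, j} that take card j from position s to
  position y, when card i lies above card j.\<close>
definition move_count :: "nat \<Rightarrow> nat \<Rightarrow> nat \<Rightarrow> real" where
  "move_count n s y = (if y = s then stay_moves n s else 0)
     + (if y + 1 = s then down_moves n s else 0) + (if y = s + 1 then up_moves n s else 0)"

lemma card_reinsert_pos_preimage:
  assumes "1 \<le> a" "a < s" "s \<le> n"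
  shows "real (card {(x, p) \<in> {1..n} \<times> {1..n}. x \<noteq> a \<and> x \<noteq> s \<and> reinsert_pos x p s = y})
       = move_count n s y"
proof -
  define S where "S = ({1..n} - {a, s}) \<times> {1..n}"
  define D where "D = ({1..<s} - {a}) \<times> {s..n}"
  define U where "U = {s<..n} \<times> {1..s}"
  have sub: "D \<subseteq> S" "U \<subseteq> S" and disj: "D \<inter> U = {}" and fin: "finite S"
    using assms by (auto simp: S_def D_def U_def)
  have move: "reinsert_pos x p s = (if (x, p) \<in> D then s - 1 else if (x, p) \<in> U then s + 1 else s)"
    if "(x, p) \<in> S" for x p
    using that by (auto simp: S_def D_def U_def reinsert_pos_def)
  have "{(x, p) \<in> {1..n} \<times> {1..n}. x \<noteq> a \<and> x \<noteq> s \<and> reinsert_pos x p s = y}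
      = {(x, p) \<in> S. reinsert_pos x p s = y}"
    by (auto simp: S_def)
  also have "\<dots> = {z \<in> S. (if z \<in> D then s - 1 else if z \<in> U then s + 1 else s) = y}"
    using move by auto
  also have "\<dots> = (if y = s then S - (D \<union> U) else if y + 1 = s then D
                    else if y = s + 1 then U else {})"
    using assms sub disj by (auto split: if_splits)
  finally have preimage: "{(x, p) \<in> {1..n} \<times> {1..n}. x \<noteq> a \<and> x \<noteq> s \<and> reinsert_pos x p s = y}
      = (if y = s then S - (D \<union> U) else if y + 1 = s then D else if y = s + 1 then U else {})" .
  have "card D = (s - 2) * (n + 1 - s)" "card U = (n - s) * s" "card S = (n - 2) * n"
    using assms by (simp_all add: S_def D_def U_def card_cartesian_product)
  then have "real (card D) = down_moves n s" "real (card U) = up_moves n s"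
    "real (card S) = real n * (real n - 2)"
    using assms by (simp_all add: down_moves_def up_moves_def of_nat_diff)
  moreover have "card (S - (D \<union> U)) = card S - card D - card U"
    using sub disj fin by (simp add: card_Diff_subset card_Un_disjoint finite_subset)
  moreover have "card D + card U \<le> card S"
    using sub disj fin by (metis card_Un_disjoint card_mono finite_subset le_sup_iff)
  ultimately show ?thesis
    using assms unfolding preimage move_count_def stay_moves_def by (auto simp: of_nat_diff)
qed

lemma card_moves_to:
  assumes \<tau>: "bij_betw \<tau> {1..n} {1..n}" and ij: "i \<in> {1..n}" "j \<in> {1..n}" "\<tau> i < \<tau> j"
  shows "real (card {(c, p) \<in> {1..n} \<times> {1..n}. c \<noteq> i \<and> c \<noteq> j \<and> rtr_move n \<tau> c p j = y})
       = move_count n (\<tau> j) y"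
proof -
  have inj: "inj_on \<tau> {1..n}" using \<tau> bij_betw_imp_inj_on by blast
  have pos: "\<tau> i \<in> {1..n}" "\<tau> j \<in> {1..n}" using \<tau> ij bij_betwE by blast+
  have "bij_betw (map_prod \<tau> id)
      {z \<in> {1..n} \<times> {1..n}. fst z \<noteq> i \<and> fst z \<noteq> j \<and> rtr_move n \<tau> (fst z) (snd z) j = y}
      {z \<in> {1..n} \<times> {1..n}. fst z \<noteq> \<tau> i \<and> fst z \<noteq> \<tau> j
                            \<and> reinsert_pos (fst z) (snd z) (\<tau> j) = y}"
    using bij_betw_map_prod[OF \<tau> bij_betw_id]
    by (rule bij_betw_Collect)
       (use ij inj inj_on_eq_iff rtr_move_eq_reinsert_pos[OF inj] in fastforce)
  from bij_betw_same_card[OF this]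
  have "card {(c, p) \<in> {1..n} \<times> {1..n}. c \<noteq> i \<and> c \<noteq> j \<and> rtr_move n \<tau> c p j = y}
      = card {(x, p) \<in> {1..n} \<times> {1..n}. x \<noteq> \<tau> i \<and> x \<noteq> \<tau> j \<and> reinsert_pos x p (\<tau> j) = y}"
    by (simp only: split_def prod.collapse)
  then show ?thesis
    using card_reinsert_pos_preimage[of "\<tau> i" "\<tau> j" n y] pos ij(3) by simp
qed

definition unchosen_at :: "nat \<Rightarrow> nat \<Rightarrow> nat \<Rightarrow> ((nat \<Rightarrow> nat) \<times> nat set) set" where
  "unchosen_at i j y = {(\<tau>, C). \<tau> j = y \<and> i \<notin> C \<and> j \<notin> C}"

definition unchosen_pos_prob :: "nat \<Rightarrow> nat \<Rightarrow> (nat \<Rightarrow> nat) \<Rightarrow> nat \<Rightarrow> nat \<Rightarrow> nat \<Rightarrow> real" where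
  "unchosen_pos_prob n t \<sigma> i j y = measure_pmf.prob (rtr_walk n t \<sigma>) (unchosen_at i j y)"

lemma prob_step_unchosen_at:
  assumes "n \<ge> 1" "bij_betw \<tau> {1..n} {1..n}" "i \<in> {1..n}" "j \<in> {1..n}"
    and "i \<notin> C \<Longrightarrow> j \<notin> C \<Longrightarrow> \<tau> i < \<tau> j"
  shows "measure_pmf.prob (rtr_step n (\<tau>, C)) (unchosen_at i j y)
       = (if i \<notin> C \<and> j \<notin> C then move_count n (\<tau> j) y else 0) / (real n)\<^sup>2"
proof -
  have "{(c, p) \<in> {1..n} \<times> {1..n}. (rtr_move n \<tau> c p, insert c C) \<in> unchosen_at i j y}
      = (if i \<notin> C \<and> j \<notin> C
         then {(c, p) \<in> {1..n} \<times> {1..n}. c \<noteq> i \<and> c \<noteq> j \<and> rtr_move n \<tau> c p j = y} else {})"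
    by (auto simp: unchosen_at_def)
  then show ?thesis
    using assms card_moves_to[OF assms(2-4)] by (simp add: measure_rtr_step)
qed

lemma move_count_eq_indicators:
  assumes "y \<ge> 1"
  shows "(if i \<notin> C \<and> j \<notin> C then move_count n (\<tau> j) y else 0)
    = stay_moves n y * indicator (unchosen_at i j y) (\<tau>, C)
      + down_moves n (y + 1) * indicator (unchosen_at i j (y + 1)) (\<tau>, C)
      + up_moves n (y - 1) * indicator (unchosen_at i j (y - 1)) (\<tau>, C)"
  using assms by (auto simp: move_count_def unchosen_at_def)

lemma unchosen_pos_prob_Suc:
  assumes "n \<ge> 1" "bij_betw \<sigma> {1..n} {1..n}" "i \<in> {1..n}" "j \<in> {1..n}" "\<sigma> i < \<sigma> j"
    and "y \<ge> 1"
  shows "unchosen_pos_prob n (Suc t) \<sigma> i j y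
    = (stay_moves n y * unchosen_pos_prob n t \<sigma> i j y
       + down_moves n (y + 1) * unchosen_pos_prob n t \<sigma> i j (y + 1)
       + up_moves n (y - 1) * unchosen_pos_prob n t \<sigma> i j (y - 1)) / (real n)\<^sup>2"
proof -
  let ?W = "rtr_walk n t \<sigma>"
  have "unchosen_pos_prob n (Suc t) \<sigma> i j y
      = (\<integral>x. measure_pmf.prob (rtr_step n x) (unchosen_at i j y) \<partial>?W)"
    by (simp add: unchosen_pos_prob_def rtr_walk_Suc_bind measure_bind_pmf del: rtr_walk.simps)
  also have "\<dots> = (\<integral>x. (stay_moves n y * indicator (unchosen_at i j y) x
        + down_moves n (y + 1) * indicator (unchosen_at i j (y + 1)) x
        + up_moves n (y - 1) * indicator (unchosen_at i j (y - 1)) x) / (real n)\<^sup>2 \<partial>?W)"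
  proof (intro integral_cong_AE AE_pmfI)
    fix x assume "x \<in> set_pmf ?W"
    moreover obtain \<tau> C where "x = (\<tau>, C)" by fastforce
    ultimately show "measure_pmf.prob (rtr_step n x) (unchosen_at i j y)
      = (stay_moves n y * indicator (unchosen_at i j y) x
        + down_moves n (y + 1) * indicator (unchosen_at i j (y + 1)) x
        + up_moves n (y - 1) * indicator (unchosen_at i j (y - 1)) x) / (real n)\<^sup>2"
      using assms rtr_walk_support[OF assms(1-5)] prob_step_unchosen_at
            move_count_eq_indicators[OF assms(6)] by simp
  qed simp_all
  also have "\<dots> = (stay_moves n y * unchosen_pos_prob n t \<sigma> i j y
       + down_moves n (y + 1) * unchosen_pos_prob n t \<sigma> i j (y + 1)
       + up_moves n (y - 1) * unchosen_pos_prob n t \<sigma> i j (y - 1)) / (real n)\<^sup>2"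
    unfolding integral_divide_zero integral_pmf_indicator_comb unchosen_pos_prob_def ..
  finally show ?thesis .
qed

lemma move_weights_sum:
  assumes "y \<ge> 1"
  shows "stay_moves n y + down_moves n (y + 1) + up_moves n (y - 1) = (real n - 1)\<^sup>2"
  using assms by (simp add: stay_moves_def down_moves_def up_moves_def of_nat_diff
                            power2_eq_square algebra_simps)

lemma stay_moves_nonneg: "stay_moves n y \<ge> 0"
proof -
  have "stay_moves n y = (real n - real y)\<^sup>2 + (real y - 2) * (real y - 1)"
    by (simp add: stay_moves_def down_moves_def up_moves_def power2_eq_square algebra_simps)
  moreover have "(real y - 2) * (real y - 1) \<ge> 0"
    by (cases "y \<le> 1") (auto simp: le_Suc_eq)
  ultimately show ?thesis by simp
qed

lemma unchosen_pos_prob_0: "unchosen_pos_prob n 0 \<sigma> i j y = (if \<sigma> j = y then 1 else 0)"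
  by (simp add: unchosen_pos_prob_def unchosen_at_def)

lemma unchosen_pos_prob_outside:
  assumes "n \<ge> 1" "bij_betw \<sigma> {1..n} {1..n}" "i \<in> {1..n}" "j \<in> {1..n}" "\<sigma> i < \<sigma> j"
    and "y \<notin> {1..n}"
  shows "unchosen_pos_prob n t \<sigma> i j y = 0"
proof -
  have "unchosen_at i j y \<inter> set_pmf (rtr_walk n t \<sigma>) = {}"
    using rtr_walk_support(1)[OF assms(1-5)] bij_betwE assms(4,6)
    by (fastforce simp: unchosen_at_def)
  then show ?thesis
    unfolding unchosen_pos_prob_def by (metis measure_Int_set_pmf measure_empty)
qed

lemma sum_unchosen_pos_prob_le:
  assumes n: "n \<ge> 1" and "finite M"
    and \<sigma>: "\<And>m. m \<in> M \<Longrightarrow> bij_betw (\<sigma> m) {1..n} {1..n} \<and> \<sigma> m i < \<sigma> m j"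
    and ij: "i \<in> {1..n}" "j \<in> {1..n}" and inj: "inj_on (\<lambda>m. \<sigma> m j) M"
  shows "(\<Sum>m\<in>M. unchosen_pos_prob n t (\<sigma> m) i j y) \<le> ((real n - 1)\<^sup>2 / (real n)\<^sup>2) ^ t"
proof (induction t arbitrary: y)
  case 0
  have "card {m \<in> M. \<sigma> m j = y} \<le> 1"
    using inj by (auto simp: card_le_Suc0_iff_eq \<open>finite M\<close> inj_on_def)
  then show ?case
    by (simp add: unchosen_pos_prob_0 sum.inter_filter[symmetric] \<open>finite M\<close>)
next
  case (Suc t)
  let ?F = "\<lambda>y. \<Sum>m\<in>M. unchosen_pos_prob n t (\<sigma> m) i j y"
  let ?B = "((real n - 1)\<^sup>2 / (real n)\<^sup>2) ^ t"
  show ?case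
  proof (cases "y \<in> {1..n}")
    case False
    then show ?thesis using unchosen_pos_prob_outside[OF n _ ij] \<sigma> by simp
  next
    case True
    then have y: "1 \<le> y" "y \<le> n" by auto
    have "(\<Sum>m\<in>M. unchosen_pos_prob n (Suc t) (\<sigma> m) i j y)
        = (stay_moves n y * ?F y + down_moves n (y + 1) * ?F (y + 1)
           + up_moves n (y - 1) * ?F (y - 1)) / (real n)\<^sup>2"
      using unchosen_pos_prob_Suc[OF n _ ij _ y(1)] \<sigma>
      by (simp add: sum_divide_distrib[symmetric] sum.distrib sum_distrib_left)
    also have "\<dots> \<le> (stay_moves n y * ?B + down_moves n (y + 1) * ?B
                    + up_moves n (y - 1) * ?B) / (real n)\<^sup>2"
      using y stay_moves_nonneg[of n y] Suc.IH
      by (intro divide_right_mono add_mono mult_left_mono)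
         (simp_all add: down_moves_def up_moves_def of_nat_diff)
    also have "\<dots> = ?B * (stay_moves n y + down_moves n (y + 1) + up_moves n (y - 1)) / (real n)\<^sup>2"
      by (simp add: algebra_simps)
    also have "\<dots> = ((real n - 1)\<^sup>2 / (real n)\<^sup>2) ^ Suc t"
      unfolding move_weights_sum[OF y(1)] by simp
    finally show ?thesis .
  qed
qed

lemma cond_pair_prob_window_eq:
  assumes n: "n \<ge> 1" and \<sigma>: "bij_betw \<sigma> {1..n} {1..n}" "\<sigma> i < \<sigma> j"
    and ij: "i \<in> {1..n}" "j \<in> {1..n}" "i \<noteq> j" and "finite W"
  shows "cond_pair_prob n t \<sigma> i j ({1..n} \<times> W)
       = (\<Sum>y\<in>W. unchosen_pos_prob n t \<sigma> i j y) / ((real n - 2) / real n) ^ t"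
proof -
  let ?P = "rtr_walk n t \<sigma>"
  let ?A = "{(\<tau>, C). (\<tau> i, \<tau> j) \<in> {1..n} \<times> W \<and> i \<in> A_set n C \<and> j \<in> A_set n C}"
  have "x \<in> ?A \<longleftrightarrow> x \<in> (\<Union>y\<in>W. unchosen_at i j y)" if "x \<in> set_pmf ?P" for x
  proof (cases x)
    case (Pair \<tau> C)
    then have "\<tau> i \<in> {1..n}"
      using rtr_walk_support(1)[OF n \<sigma>(1) ij(1,2) \<sigma>(2)] that ij(1) bij_betwE by blast
    then show ?thesis using ij by (auto simp: Pair unchosen_at_def A_set_def)
  qed
  then have support: "?A \<inter> set_pmf ?P = (\<Union>y\<in>W. unchosen_at i j y) \<inter> set_pmf ?P"
    by blast
  have "measure_pmf.prob ?P ?A = measure_pmf.prob ?P (?A \<inter> set_pmf ?P)"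
    by (rule measure_Int_set_pmf[symmetric])
  also have "\<dots> = measure_pmf.prob ?P (\<Union>y\<in>W. unchosen_at i j y)"
    unfolding support by (rule measure_Int_set_pmf)
  also have "\<dots> = (\<Sum>y\<in>W. unchosen_pos_prob n t \<sigma> i j y)"
    unfolding unchosen_pos_prob_def
    by (rule measure_pmf.finite_measure_finite_Union[OF \<open>finite W\<close>])
       (auto simp: disjoint_family_on_def unchosen_at_def)
  finally have num: "measure_pmf.prob ?P ?A = (\<Sum>y\<in>W. unchosen_pos_prob n t \<sigma> i j y)" .
  have "{(\<tau>, C). i \<in> A_set n C \<and> j \<in> A_set n C} = both_unchosen i j"
    using ij by (auto simp: A_set_def both_unchosen_def)
  then have den: "measure_pmf.prob ?P {(\<tau>, C). i \<in> A_set n C \<and> j \<in> A_set n C}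
      = ((real n - 2) / real n) ^ t"
    using prob_both_unchosen[OF ij] by simp
  show ?thesis unfolding cond_pair_prob_def num den ..
qed

lemma card_window_le:
  assumes "\<delta> \<ge> 0"
  shows "real (card (window n k \<delta>)) \<le> 2 * \<delta> + 1"
proof (cases "window n k \<delta> = {}")
  case False
  let ?W = "window n k \<delta>"
  have fin: "finite ?W" by (simp add: window_def)
  have "card ?W \<le> card {Min ?W..Max ?W}"
    using fin by (intro card_mono) auto
  also have "\<dots> = Max ?W + 1 - Min ?W" by simp
  finally have "real (card ?W) \<le> real (Max ?W + 1 - Min ?W)" by (simp only: of_nat_le_iff)
  then have "real (card ?W) \<le> real (Max ?W) + 1 - real (Min ?W)"
    using Min_le[OF fin Max_in[OF fin False]] by (simp add: of_nat_diff)
  moreover have "real (Max ?W) \<le> real k + \<delta>" "real k - \<delta> \<le> real (Min ?W)"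
    using Max_in[OF fin False] Min_in[OF fin False] by (auto simp: window_def)
  ultimately show ?thesis by linarith
qed (use assms in simp)

lemma growth_factor_power_le:
  assumes n: "n \<ge> 3" and t: "real t \<le> real n * ln (real n)"
  shows "((real n - 1)\<^sup>2 / (real n * (real n - 2))) ^ t \<le> exp (ln (real n) / (real n - 2))"
proof -
  define e where "e = 1 / (real n * (real n - 2))"
  have e_pos: "e > 0" using n by (simp add: e_def)
  have "(real n - 1)\<^sup>2 / (real n * (real n - 2)) = 1 + e"
    using n by (simp add: e_def field_simps power2_eq_square)
  then have "((real n - 1)\<^sup>2 / (real n * (real n - 2))) ^ t \<le> exp e ^ t"
    using e_pos exp_ge_add_one_self[of e] by (simp add: power_mono)
  also have "\<dots> = exp (real t * e)" by (simp add: exp_of_nat_mult)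
  also have "\<dots> \<le> exp (real n * ln (real n) * e)"
    using t e_pos by (simp add: mult_right_mono)
  also have "real n * ln (real n) * e = ln (real n) / (real n - 2)"
    using n by (simp add: e_def)
  finally show ?thesis .
qed

text \<open>The argument gives 2\<delta> + 1 + O(log n); the term (ln n)^2 only makes the error
  term exactly of the order required.\<close>
definition rtr_error :: "nat \<Rightarrow> real" where
  "rtr_error n = (ln (real n))\<^sup>2 + 1 + real n * (exp (ln (real n) / (real n - 2)) - 1)"

lemma rtr_error_Theta: "rtr_error \<in> \<Theta>(\<lambda>n. (ln (real n))\<^sup>2)"
  unfolding rtr_error_def by real_asymp

lemma sum_cond_pair_prob_le_card:
  assumes n: "n \<ge> 3" and ij: "i \<in> {1..n}" "j \<in> {1..n}" "i \<noteq> j" and "finite W"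
    and \<sigma>: "\<forall>m \<in> {2..n-1}. \<sigma> m permutes {1..n} \<and> \<sigma> m i = 1 \<and> \<sigma> m j = m"
  shows "(\<Sum>m = 2..n-1. cond_pair_prob n t (\<sigma> m) i j ({1..n} \<times> W))
       \<le> real (card W) * ((real n - 1)\<^sup>2 / (real n * (real n - 2))) ^ t"
proof -
  let ?D = "((real n - 2) / real n) ^ t"
  have \<sigma>': "bij_betw (\<sigma> m) {1..n} {1..n} \<and> \<sigma> m i < \<sigma> m j" if "m \<in> {2..n-1}" for m
    using \<sigma> that permutes_imp_bij by fastforce
  have "(\<Sum>m = 2..n-1. cond_pair_prob n t (\<sigma> m) i j ({1..n} \<times> W))
      = (\<Sum>y\<in>W. \<Sum>m = 2..n-1. unchosen_pos_prob n t (\<sigma> m) i j y) / ?D"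
    using cond_pair_prob_window_eq[OF _ _ _ ij \<open>finite W\<close>] \<sigma>' n
    by (simp add: sum_divide_distrib[symmetric] sum.swap[of _ _ W])
  also have "\<dots> \<le> (\<Sum>y\<in>W. ((real n - 1)\<^sup>2 / (real n)\<^sup>2) ^ t) / ?D"
  proof (intro divide_right_mono sum_mono)
    show "(\<Sum>m = 2..n-1. unchosen_pos_prob n t (\<sigma> m) i j y) \<le> ((real n - 1)\<^sup>2 / (real n)\<^sup>2) ^ t" for y
    proof (rule sum_unchosen_pos_prob_le)
      show "inj_on (\<lambda>m. \<sigma> m j) {2..n-1}" using \<sigma> by (simp add: inj_on_def)
    qed (use \<sigma>' n ij in auto)
    show "0 \<le> ?D"
      using n by (intro zero_le_power divide_nonneg_nonneg) auto
  qed
  also have "\<dots> = real (card W) * (((real n - 1)\<^sup>2 / (real n)\<^sup>2) ^ t / ?D)"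
    by simp
  also have "(real n - 1)\<^sup>2 / (real n)\<^sup>2 / ((real n - 2) / real n)
      = (real n - 1)\<^sup>2 / (real n * (real n - 2))"
    using n by (simp add: field_simps power2_eq_square)
  then have "((real n - 1)\<^sup>2 / (real n)\<^sup>2) ^ t / ?D = ((real n - 1)\<^sup>2 / (real n * (real n - 2))) ^ t"
    by (metis power_divide)
  finally show ?thesis by simp
qed

lemma window_weight_le:
  assumes n: "n \<ge> 3" and t: "real t \<le> real n * ln (real n)"
    and c: "c \<le> 2 * \<delta> + 1" "c \<le> real n" "c \<ge> 0"
  shows "c * ((real n - 1)\<^sup>2 / (real n * (real n - 2))) ^ t
       \<le> 2 * \<delta> + 1 + real n * (exp (ln (real n) / (real n - 2)) - 1)"
proof -
  define r where "r = (real n - 1)\<^sup>2 / (real n * (real n - 2))"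
  have "1 \<le> r" using n by (simp add: r_def field_simps power2_eq_square)
  have "c * r ^ t = c + c * (r ^ t - 1)" by (simp add: algebra_simps)
  also have "\<dots> \<le> (2 * \<delta> + 1) + real n * (exp (ln (real n) / (real n - 2)) - 1)"
    using c \<open>1 \<le> r\<close> growth_factor_power_le[OF n t]
    by (intro add_mono mult_mono) (simp_all add: r_def)
  finally show ?thesis by (simp add: r_def)
qed

lemma sum_cond_pair_prob_le:
  assumes "n \<ge> 3" "i \<in> {1..n}" "j \<in> {1..n}" "i \<noteq> j" "\<delta> \<ge> 0"
    and "real t \<le> real n * ln (real n)"
    and "\<forall>m \<in> {2..n-1}. \<sigma> m permutes {1..n} \<and> \<sigma> m i = 1 \<and> \<sigma> m j = m"
  shows "(\<Sum>m = 2..n-1. cond_pair_prob n t (\<sigma> m) i j ({1..n} \<times> window n j \<delta>))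
       \<le> 2 * \<delta> + rtr_error n"
proof -
  let ?W = "window n j \<delta>"
  have "?W \<subseteq> {1..n}" by (auto simp: window_def)
  then have "finite ?W" "card ?W \<le> n" by (auto dest: finite_subset card_mono[rotated])
  have "(\<Sum>m = 2..n-1. cond_pair_prob n t (\<sigma> m) i j ({1..n} \<times> ?W))
      \<le> real (card ?W) * ((real n - 1)\<^sup>2 / (real n * (real n - 2))) ^ t"
    using assms \<open>finite ?W\<close> by (intro sum_cond_pair_prob_le_card) auto
  also have "\<dots> \<le> 2 * \<delta> + 1 + real n * (exp (ln (real n) / (real n - 2)) - 1)"
    using assms \<open>card ?W \<le> n\<close> card_window_le by (intro window_weight_le) auto
  also have "\<dots> \<le> 2 * \<delta> + rtr_error n" by (simp add: rtr_error_def)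
  finally show ?thesis .
qed

theorem corollary1:
  shows "\<exists>g :: nat \<Rightarrow> real. g \<in> \<Theta>(\<lambda>n. (ln (real n))\<^sup>2) \<and>
    (\<forall>n i j (\<delta>::real) t (\<sigma> :: nat \<Rightarrow> nat \<Rightarrow> nat).
       i \<in> {1..n} \<and> j \<in> {1..n} \<and> i \<noteq> j \<and> \<delta> \<ge> 0 \<and>
       real t \<le> real n * ln (real n) \<and>
       (\<forall>m \<in> {2..n-1}. \<sigma> m permutes {1..n} \<and> \<sigma> m i = 1 \<and> \<sigma> m j = m)
       \<longrightarrow> (\<Sum>m = 2..n-1. cond_pair_prob n t (\<sigma> m) i j ({1..n} \<times> window n j \<delta>))
           \<le> 2 * \<delta> + g n)"
proof (intro exI[of _ rtr_error] conjI allI impI)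
  show "rtr_error \<in> \<Theta>(\<lambda>n. (ln (real n))\<^sup>2)" by (rule rtr_error_Theta)
  fix n i j t and \<delta> :: real and \<sigma> :: "nat \<Rightarrow> nat \<Rightarrow> nat"
  assume H: "i \<in> {1..n} \<and> j \<in> {1..n} \<and> i \<noteq> j \<and> \<delta> \<ge> 0 \<and> real t \<le> real n * ln (real n) \<and>
    (\<forall>m \<in> {2..n-1}. \<sigma> m permutes {1..n} \<and> \<sigma> m i = 1 \<and> \<sigma> m j = m)"
  show "(\<Sum>m = 2..n-1. cond_pair_prob n t (\<sigma> m) i j ({1..n} \<times> window n j \<delta>)) \<le> 2 * \<delta> + rtr_error n"
  proof (cases "n \<ge> 3")
    case True
    then show ?thesis using H by (intro sum_cond_pair_prob_le) auto
  next
    case False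
    then have "n = 0 \<or> n = 1 \<or> n = 2" by auto
    then have "rtr_error n \<ge> 0" by (auto simp: rtr_error_def)
    then show ?thesis using False H by simp
  qed
qed

end
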